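(* Let $\mathbf P$ be a pentagon. For every constant $D\ge 1$ there is a linear reduction from $\mathsf{Lattice\text{-}Eval}(\mathbb L(\mathbf P),D)$ to $\mathsf{Pent\text{-}Eval}(\mathbf P)$.
   Context: For a set $X$, $\mathrm{Eq}(X)$ is the lattice of equivalence relations on $X$, with bottom $0_X=\{(a,a)\}$ and top $1_X=X^2$; $\theta\circ\theta'$ is relational product. A pentagon is a finite structure $\mathbf P$ with domain $P$ and three equivalence relations $\alpha^{\mathbf P},\beta^{\mathbf P},\gamma^{\mathbf P}$ on $P$ such that in $\mathrm{Eq}(P)$: $\alpha^{\mathbf P}\le\beta^{\mathbf P}$, $\beta^{\mathbf P}\wedge\gamma^{\mathbf P}=0_P$, $\beta^{\mathbf P}\circ\gamma^{\mathbf P}=1_P$, $\alpha^{\mathbf P}\vee\gamma^{\mathbf P}=1_P$. Then $P$ decomposes as $P=B_{\mathbf P}\times C_{\mathbf P}$ so that $\beta^{\mathbf P},\gamma^{\mathbf P}$ are the kernels of the projections onto $B_{\mathbf P}$ and $C_{\mathbf P}$ respectively. For $b\in B_{\mathbf P}$ let $\alpha^{\mathbf P}_b=\{(c,c')\in C_{\mathbf P}^2\mid((b,c),(b,c'))\in\alpha^{\mathbf P}\}$, and let $\mathbb L(\mathbf P)$ be the sublattice of $\mathrm{Eq}(C_{\mathbf P})$ generated by $\{\alpha^{\mathbf P}_b: b\in B_{\mathbf P}\}$. $\mathbf P_2$ is the 2-sorted structure with sorts $B_{\mathbf P}$ (first) and $C_{\mathbf P}$ (second) and one ternary relation $R=\{(b,c,c')\in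 B_{\mathbf P}\times C_{\mathbf P}\times C_{\mathbf P}\mid (c,c')\in\alpha^{\mathbf P}_b\}$; in atoms $R(x,y,y')$, $x$ is of first sort and $y,y'$ of second sort. $\mathsf{Pent\text{-}Eval}(\mathbf P)$: instances are a primitive-positive formula $\phi(X,Y)$ over $\{R\}$ (conjunction of atoms with some variables existentially quantified) with free variables $X$ of first sort and $Y$ of second sort ($X\cap Y=\emptyset$), and weights $w:X\cup Y\to[0,1]$ summing to 1; assignments map $X$ to $B_{\mathbf P}$ and $Y$ to $C_{\mathbf P}$ and are satisfying if $\phi$ is true in $\mathbf P_2$. For a finite lattice $\mathbb L$ and $D$, $\mathsf{Lattice\text{-}Eval}(\mathbb L,D)$: instances are a circuit $C$ on variables $V$ over $\{\wedge,\vee\}$ (fan-in 2) of depth $<D+D\log_2|V|$, an element $\ell\in L$, and weights $w$ on $V$ summing to 1; $f:V\to L$ is satisfying if $C(f)\ge\ell$. In both problems $\mathrm{dist}_{\mathcal I}(f)$ is the minimum weight of the set of free variables on which $f$ differs from some satisfying assignment. A linear reduction from $\mathcal P$ to $\mathcal P'$: given $(\mathcal I,f)$ with $\mathcal I$ on variable set $V$, it (possibly randomly) produces $(\mathcal I',f')$ with $|V'|=O(|V|)$ such that (i) $f$ satisfying implies $f'$ satisfying; (ii) for a constant $c_1>0$ and every $\epsilon\in(0,1)$, $\mathrm{dist}_{\mathcal I}(f)\ge\epsilon$ implies $\Pr[\mathrm{dist}_{\mathcal I'}(f')\ge c_1\epsilon]\ge9/10$; (iii) each value of $f'$ is computable with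 $O(1)$ queries to $f$. *)

theory Defs
  imports "HOL-Probability.Probability"
begin

text \<open>Join in Eq(P) of equivalences on P is the
  transitive closure of the union; relational product is O.\<close>

definition pentagon :: "'a set \<Rightarrow> ('a \<times> 'a) set \<Rightarrow> ('a \<times> 'a) set \<Rightarrow> ('a \<times> 'a) set \<Rightarrow> bool" where
  "pentagon P al be ga \<longleftrightarrow>
     finite P \<and> equiv P al \<and> equiv P be \<and> equiv P ga \<and>
     al \<subseteq> be \<and> be \<inter> ga = Id_on P \<and> be O ga = P \<times> P \<and> (al \<union> ga)\<^sup>+ = P \<times> P"

text \<open>Canonical decomposition: B_P = P // be and C_P = P // ga; the point (b,c) of B_P x C_P is
  the unique element of the intersection of the classes b and c.\<close>

type_synonym 'a crel = "('a set \<times> 'a set) set"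

definition alpha_b :: "'a set \<Rightarrow> ('a \<times> 'a) set \<Rightarrow> ('a \<times> 'a) set \<Rightarrow> 'a set \<Rightarrow> 'a crel" where
  "alpha_b P al ga b = {(c, c'). c \<in> P // ga \<and> c' \<in> P // ga \<and>
      (\<exists>p p'. p \<in> b \<inter> c \<and> p' \<in> b \<inter> c' \<and> (p, p') \<in> al)}"

inductive_set LP :: "'a set \<Rightarrow> ('a \<times> 'a) set \<Rightarrow> ('a \<times> 'a) set \<Rightarrow> ('a \<times> 'a) set \<Rightarrow> 'a crel set"
  for P al be ga where
  gen: "b \<in> P // be \<Longrightarrow> alpha_b P al ga b \<in> LP P al be ga"
| meet: "x \<in> LP P al be ga \<Longrightarrow> y \<in> LP P al be ga \<Longrightarrow> x \<inter> y \<in> LP P al be ga"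
| join: "x \<in> LP P al be ga \<Longrightarrow> y \<in> LP P al be ga \<Longrightarrow> (x \<union> y)\<^sup>+ \<in> LP P al be ga"

definition pR :: "'a set \<Rightarrow> ('a \<times> 'a) set \<Rightarrow> ('a \<times> 'a) set \<Rightarrow> ('a \<times> 'a) set \<Rightarrow>
    'a set \<Rightarrow> 'a set \<Rightarrow> 'a set \<Rightarrow> bool" where
  "pR P al be ga b c c' \<longleftrightarrow> b \<in> P // be \<and> c \<in> P // ga \<and> c' \<in> P // ga \<and> (c, c') \<in> alpha_b P al ga b"

datatype 'v circ = CVar 'v | CMeet "'v circ" "'v circ" | CJoin "'v circ" "'v circ"

fun circ_vars :: "'v circ \<Rightarrow> 'v set" where
  "circ_vars (CVar v) = {v}"
| "circ_vars (CMeet a b) = circ_vars a \<union> circ_vars b"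
| "circ_vars (CJoin a b) = circ_vars a \<union> circ_vars b"

fun circ_depth :: "'v circ \<Rightarrow> nat" where
  "circ_depth (CVar v) = 0"
| "circ_depth (CMeet a b) = Suc (max (circ_depth a) (circ_depth b))"
| "circ_depth (CJoin a b) = Suc (max (circ_depth a) (circ_depth b))"

fun circ_eval :: "('v \<Rightarrow> 'a crel) \<Rightarrow> 'v circ \<Rightarrow> 'a crel" where
  "circ_eval f (CVar v) = f v"
| "circ_eval f (CMeet a b) = circ_eval f a \<inter> circ_eval f b"
| "circ_eval f (CJoin a b) = (circ_eval f a \<union> circ_eval f b)\<^sup>+"

record ('v, 'a) lat_inst =
  LV :: "'v set"
  LC :: "'v circ"
  Lell :: "'a crel"
  Lw :: "'v \<Rightarrow> real"

definition lat_valid :: "'a crel set \<Rightarrow> real \<Rightarrow> ('v, 'a) lat_inst \<Rightarrow> bool" where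
  "lat_valid L D I \<longleftrightarrow> finite (LV I) \<and> circ_vars (LC I) \<subseteq> LV I \<and>
     real (circ_depth (LC I)) < D + D * log 2 (real (card (LV I))) \<and>
     Lell I \<in> L \<and> (\<forall>v \<in> LV I. 0 \<le> Lw I v \<and> Lw I v \<le> 1) \<and> sum (Lw I) (LV I) = 1"

definition lat_assign :: "'a crel set \<Rightarrow> ('v, 'a) lat_inst \<Rightarrow> ('v \<Rightarrow> 'a crel) \<Rightarrow> bool" where
  "lat_assign L I f \<longleftrightarrow> (\<forall>v \<in> LV I. f v \<in> L)"

definition lat_sat :: "'a crel set \<Rightarrow> ('v, 'a) lat_inst \<Rightarrow> ('v \<Rightarrow> 'a crel) \<Rightarrow> bool" where
  "lat_sat L I f \<longleftrightarrow> lat_assign L I f \<and> Lell I \<subseteq> circ_eval f (LC I)"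

definition lat_dist :: "'a crel set \<Rightarrow> ('v, 'a) lat_inst \<Rightarrow> ('v \<Rightarrow> 'a crel) \<Rightarrow> ereal" where
  "lat_dist L I f = Inf {ereal (sum (Lw I) {v \<in> LV I. f v \<noteq> g v}) | g. lat_sat L I g}"

text \<open>A primitive-positive formula: free variables PX (first sort), PY (second sort),
  existentially quantified variables PEX (first sort), PEY (second sort), and a list of
  atoms R(x,y,y').\<close>

record 'w pent_inst =
  PX :: "'w set"
  PY :: "'w set"
  PEX :: "'w set"
  PEY :: "'w set"
  Patoms :: "('w \<times> 'w \<times> 'w) list"
  Pw :: "'w \<Rightarrow> real"

definition pent_valid :: "'w pent_inst \<Rightarrow> bool" where
  "pent_valid I \<longleftrightarrow> finite (PX I) \<and> finite (PY I) \<and> finite (PEX I) \<and> finite (PEY I) \<and>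
     PX I \<inter> PY I = {} \<and> PX I \<inter> PEX I = {} \<and> PX I \<inter> PEY I = {} \<and>
     PY I \<inter> PEX I = {} \<and> PY I \<inter> PEY I = {} \<and> PEX I \<inter> PEY I = {} \<and>
     (\<forall>(x, y, y') \<in> set (Patoms I). x \<in> PX I \<union> PEX I \<and> y \<in> PY I \<union> PEY I \<and> y' \<in> PY I \<union> PEY I) \<and>
     (\<forall>v \<in> PX I \<union> PY I. 0 \<le> Pw I v \<and> Pw I v \<le> 1) \<and> sum (Pw I) (PX I \<union> PY I) = 1"

definition pent_assign :: "'a set \<Rightarrow> ('a \<times> 'a) set \<Rightarrow> ('a \<times> 'a) set \<Rightarrow> 'w pent_inst \<Rightarrow> ('w \<Rightarrow> 'a set) \<Rightarrow> bool" where
  "pent_assign P be ga I g \<longleftrightarrow> (\<forall>x \<in> PX I. g x \<in> P // be) \<and> (\<forall>y \<in> PY I. g y \<in> P // ga)"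

definition pent_sat :: "'a set \<Rightarrow> ('a \<times> 'a) set \<Rightarrow> ('a \<times> 'a) set \<Rightarrow> ('a \<times> 'a) set \<Rightarrow>
    'w pent_inst \<Rightarrow> ('w \<Rightarrow> 'a set) \<Rightarrow> bool" where
  "pent_sat P al be ga I g \<longleftrightarrow> pent_assign P be ga I g \<and>
     (\<exists>h. (\<forall>v \<in> PX I \<union> PY I. h v = g v) \<and> (\<forall>x \<in> PEX I. h x \<in> P // be) \<and>
          (\<forall>y \<in> PEY I. h y \<in> P // ga) \<and>
          (\<forall>(x, y, y') \<in> set (Patoms I). pR P al be ga (h x) (h y) (h y')))"

definition pent_dist :: "'a set \<Rightarrow> ('a \<times> 'a) set \<Rightarrow> ('a \<times> 'a) set \<Rightarrow> ('a \<times> 'a) set \<Rightarrow>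
    'w pent_inst \<Rightarrow> ('w \<Rightarrow> 'a set) \<Rightarrow> ereal" where
  "pent_dist P al be ga I g =
     Inf {ereal (sum (Pw I) {v \<in> PX I \<union> PY I. g v \<noteq> h v}) | h. pent_sat P al be ga I h}"

text \<open>A (randomized) reduction maps a source instance I to a distribution over pairs (I', dec):
  I' is the produced Pent-Eval instance (variables of type 'v * nat) and dec turns the source
  assignment f into f' = dec f.\<close>

definition linear_reduction ::
  "'a set \<Rightarrow> ('a \<times> 'a) set \<Rightarrow> ('a \<times> 'a) set \<Rightarrow> ('a \<times> 'a) set \<Rightarrow> real \<Rightarrow>
   (('v, 'a) lat_inst \<Rightarrow> (('v \<times> nat) pent_inst \<times> (('v \<Rightarrow> 'a crel) \<Rightarrow> ('v \<times> nat) \<Rightarrow> 'a set)) pmf) \<Rightarrow> bool"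
  where
  "linear_reduction P al be ga D red \<longleftrightarrow>
    (\<exists>(c0::real) (c1::real) (k::nat). c0 > 0 \<and> c1 > 0 \<and>
      (\<forall>I. lat_valid (LP P al be ga) D I \<longrightarrow>
        (\<forall>(I', dec) \<in> set_pmf (red I).
            pent_valid I' \<and>
            real (card (PX I' \<union> PY I')) \<le> c0 * real (card (LV I)) \<and>
            (\<forall>v' \<in> PX I' \<union> PY I'. \<exists>Q \<subseteq> LV I. card Q \<le> k \<and>
               (\<forall>f g. (\<forall>q \<in> Q. f q = g q) \<longrightarrow> dec f v' = dec g v'))) \<and>
        (\<forall>f. lat_assign (LP P al be ga) I f \<longrightarrow>
           (\<forall>(I', dec) \<in> set_pmf (red I).
               pent_assign P be ga I' (dec f) \<and>
               (lat_sat (LP P al be ga) I f \<longrightarrow> pent_sat P al be ga I' (dec f))) \<and>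
           (\<forall>\<epsilon>::real. 0 < \<epsilon> \<and> \<epsilon> < 1 \<longrightarrow> lat_dist (LP P al be ga) I f \<ge> ereal \<epsilon> \<longrightarrow>
              measure_pmf.prob (red I)
                 {(I', dec). pent_dist P al be ga I' (dec f) \<ge> ereal (c1 * \<epsilon>)} \<ge> 9 / 10))))"

end

theory Submission
  imports Defs "HOL-Library.Sublist" "HOL-Library.Nat_Bijection"
begin

text \<open>
  Every element of L(P) is the value of a complete 4-ary tree of one fixed depth N that
  computes (a meet b) join (c meet d) at each node and has generators alpha_b at its leaves.
  The generators are the relations R(b, -, -) of P_2, meets are conjunctions, and the join of
  two reflexive relations on the finite set C_P is a bounded power of their composition; so a
  lattice circuit with such a tree substituted for each variable is primitive-positive
  definable in P_2. The reduction replaces each lattice variable by the 4^N first-sort leaves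
  of its tree, adds one free second-sort variable y_c per element c of C_P, and asserts
  (y_c, y_c') in the compiled circuit for every pair (c, c') of the target element. Half
  of the weight is put on the leaves and half on the C_P-variables. A satisfying assignment
  close to the encoding of f either changes some C_P-variable, at cost 1/(2 |C_P|), or it
  decodes tree by tree to a satisfying lattice assignment, and then every lattice variable on
  which that assignment differs from f forces a changed leaf.
  Only free variables count towards the size of the produced instance.
\<close>

section \<open>Relation expressions and their primitive-positive formulas\<close>

datatype 'w rexp = RAtom 'w | RMeet "'w rexp" "'w rexp" | RComp "'w rexp" "'w rexp"

fun rexp_sem :: "('w \<Rightarrow> 'c rel) \<Rightarrow> 'w rexp \<Rightarrow> 'c rel" where
  "rexp_sem \<rho> (RAtom x) = \<rho> x"
| "rexp_sem \<rho> (RMeet a b) = rexp_sem \<rho> a \<inter> rexp_sem \<rho> b"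
| "rexp_sem \<rho> (RComp a b) = rexp_sem \<rho> a O rexp_sem \<rho> b"

fun rexp_names :: "'w rexp \<Rightarrow> 'w set" where
  "rexp_names (RAtom x) = {x}"
| "rexp_names (RMeet a b) = rexp_names a \<union> rexp_names b"
| "rexp_names (RComp a b) = rexp_names a \<union> rexp_names b"

text \<open>
  Positions are reversed paths in the expression tree; the composition node at position \<open>p\<close>
  gets the existentially quantified midpoint variable \<open>mid p\<close>.
\<close>

fun rexp_midpoints :: "'w rexp \<Rightarrow> nat list \<Rightarrow> nat list set" where
  "rexp_midpoints (RAtom x) p = {}"
| "rexp_midpoints (RMeet a b) p = rexp_midpoints a (0 # p) \<union> rexp_midpoints b (1 # p)"
| "rexp_midpoints (RComp a b) p = {p} \<union> rexp_midpoints a (0 # p) \<union> rexp_midpoints b (1 # p)"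

fun rexp_atoms :: "(nat list \<Rightarrow> 'w) \<Rightarrow> 'w rexp \<Rightarrow> 'w \<Rightarrow> 'w \<Rightarrow> nat list \<Rightarrow> ('w \<times> 'w \<times> 'w) list" where
  "rexp_atoms mid (RAtom x) y y' p = [(x, y, y')]"
| "rexp_atoms mid (RMeet a b) y y' p = rexp_atoms mid a y y' (0 # p) @ rexp_atoms mid b y y' (1 # p)"
| "rexp_atoms mid (RComp a b) y y' p =
     rexp_atoms mid a y (mid p) (0 # p) @ rexp_atoms mid b (mid p) y' (1 # p)"

lemma finite_rexp_midpoints: "finite (rexp_midpoints e p)"
  by (induction e arbitrary: p) auto

lemma rexp_midpoints_suffix: "q \<in> rexp_midpoints e p \<Longrightarrow> suffix p q"
  by (induction e arbitrary: p) (auto dest: suffix_ConsD)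

lemma rexp_midpoints_Cons_disjoint:
  "i \<noteq> j \<Longrightarrow> rexp_midpoints a (i # p) \<inter> rexp_midpoints b (j # p) = {}"
  by (auto dest!: rexp_midpoints_suffix simp: suffix_def append_eq_append_conv)

lemma rexp_midpoints_Cons_not_self: "p \<notin> rexp_midpoints e (i # p)"
  by (auto dest!: rexp_midpoints_suffix simp: suffix_def dest: arg_cong[where f = length])

lemma set_rexp_atoms:
  "(x, z, z') \<in> set (rexp_atoms mid e y y' p) \<Longrightarrow> x \<in> rexp_names e \<and>
     z \<in> {y, y'} \<union> mid ` rexp_midpoints e p \<and> z' \<in> {y, y'} \<union> mid ` rexp_midpoints e p"
  by (induction e arbitrary: y y' p) fastforce+

lemma rexp_sem_subset: "(\<And>x. \<rho> x \<subseteq> S \<times> S) \<Longrightarrow> rexp_sem \<rho> e \<subseteq> S \<times> S"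
  by (induction e) auto

definition atoms_hold :: "('w \<Rightarrow> 'c rel) \<Rightarrow> ('w \<Rightarrow> 'c) \<Rightarrow> ('w \<times> 'w \<times> 'w) list \<Rightarrow> bool" where
  "atoms_hold \<rho> h as \<longleftrightarrow> (\<forall>(x, z, z') \<in> set as. (h z, h z') \<in> \<rho> x)"

lemma atoms_hold_append [simp]:
  "atoms_hold \<rho> h (as @ bs) \<longleftrightarrow> atoms_hold \<rho> h as \<and> atoms_hold \<rho> h bs"
  by (simp add: atoms_hold_def ball_Un)

lemma atoms_hold_single [simp]: "atoms_hold \<rho> h [(x, z, z')] \<longleftrightarrow> (h z, h z') \<in> \<rho> x"
  by (simp add: atoms_hold_def)

lemma rexp_atoms_sound:
  "atoms_hold \<rho> h (rexp_atoms mid e y y' p) \<Longrightarrow> (h y, h y') \<in> rexp_sem \<rho> e"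
  by (induction e arbitrary: y y' p) (fastforce intro: relcompI)+

text \<open>
  The witness \<open>W\<close> is a function of positions only, so witnesses for formulas with disjoint
  sets of positions can be glued together.
\<close>

lemma rexp_atoms_complete:
  assumes "(a, b) \<in> rexp_sem \<rho> e" and "\<And>x. \<rho> x \<subseteq> S \<times> S"
  shows "\<exists>W. W ` rexp_midpoints e p \<subseteq> S \<and>
    (\<forall>h. h y = a \<longrightarrow> h y' = b \<longrightarrow> (\<forall>q \<in> rexp_midpoints e p. h (mid q) = W q) \<longrightarrow>
       atoms_hold \<rho> h (rexp_atoms mid e y y' p))"
  using assms(1)
proof (induction e arbitrary: a b y y' p)
  case (RAtom x)
  then show ?case by auto
next
  case (RMeet e1 e2)
  from RMeet.prems have ab: "(a, b) \<in> rexp_sem \<rho> e1" "(a, b) \<in> rexp_sem \<rho> e2" by auto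
  obtain W1 where W1: "W1 ` rexp_midpoints e1 (0 # p) \<subseteq> S"
    "\<And>h. h y = a \<Longrightarrow> h y' = b \<Longrightarrow> \<forall>q \<in> rexp_midpoints e1 (0 # p). h (mid q) = W1 q \<Longrightarrow>
      atoms_hold \<rho> h (rexp_atoms mid e1 y y' (0 # p))"
    using RMeet.IH(1)[OF ab(1), of "0 # p" y y'] by blast
  obtain W2 where W2: "W2 ` rexp_midpoints e2 (1 # p) \<subseteq> S"
    "\<And>h. h y = a \<Longrightarrow> h y' = b \<Longrightarrow> \<forall>q \<in> rexp_midpoints e2 (1 # p). h (mid q) = W2 q \<Longrightarrow>
      atoms_hold \<rho> h (rexp_atoms mid e2 y y' (1 # p))"
    using RMeet.IH(2)[OF ab(2), of "1 # p" y y'] by blast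
  define W where "W q = (if q \<in> rexp_midpoints e1 (0 # p) then W1 q else W2 q)" for q
  have "W1 q = W q" if "q \<in> rexp_midpoints e1 (0 # p)" for q
    using that by (simp add: W_def)
  moreover have "W2 q = W q" if "q \<in> rexp_midpoints e2 (1 # p)" for q
    using that rexp_midpoints_Cons_disjoint[of 0 1 e1 p e2] by (auto simp: W_def)
  ultimately show ?case using W1 W2 by (intro exI[of _ W]) auto
next
  case (RComp e1 e2)
  obtain d where d: "(a, d) \<in> rexp_sem \<rho> e1" "(d, b) \<in> rexp_sem \<rho> e2"
    using RComp.prems by auto
  have "d \<in> S" using d(1) rexp_sem_subset[of \<rho> S e1] assms(2) by blast
  obtain W1 where W1: "W1 ` rexp_midpoints e1 (0 # p) \<subseteq> S"
    "\<And>h. h y = a \<Longrightarrow> h (mid p) = d \<Longrightarrow> \<forall>q \<in> rexp_midpoints e1 (0 # p). h (mid q) = W1 q \<Longrightarrow>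
      atoms_hold \<rho> h (rexp_atoms mid e1 y (mid p) (0 # p))"
    using RComp.IH(1)[OF d(1), of "0 # p" y "mid p"] by blast
  obtain W2 where W2: "W2 ` rexp_midpoints e2 (1 # p) \<subseteq> S"
    "\<And>h. h (mid p) = d \<Longrightarrow> h y' = b \<Longrightarrow> \<forall>q \<in> rexp_midpoints e2 (1 # p). h (mid q) = W2 q \<Longrightarrow>
      atoms_hold \<rho> h (rexp_atoms mid e2 (mid p) y' (1 # p))"
    using RComp.IH(2)[OF d(2), of "1 # p" "mid p" y'] by blast
  define W where
    "W q = (if q = p then d else if q \<in> rexp_midpoints e1 (0 # p) then W1 q else W2 q)" for q
  have "W p = d" by (simp add: W_def)
  moreover have "W1 q = W q" if "q \<in> rexp_midpoints e1 (0 # p)" for q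
    using that rexp_midpoints_Cons_not_self by (auto simp: W_def)
  moreover have "W2 q = W q" if "q \<in> rexp_midpoints e2 (1 # p)" for q
    using that rexp_midpoints_Cons_disjoint[of 0 1 e1 p e2] rexp_midpoints_Cons_not_self
    by (auto simp: W_def)
  ultimately show ?case using W1 W2 \<open>d \<in> S\<close> by (intro exI[of _ W]) auto
qed

fun rexp_pow :: "nat \<Rightarrow> 'w rexp \<Rightarrow> 'w rexp" where
  "rexp_pow 0 e = e"
| "rexp_pow (Suc n) e = RComp e (rexp_pow n e)"

lemma rexp_sem_pow: "rexp_sem \<rho> (rexp_pow n e) = rexp_sem \<rho> e ^^ Suc n"
proof (induction n)
  case 0
  then show ?case by simp
next
  case (Suc n)
  have "rexp_sem \<rho> (rexp_pow (Suc n) e) = rexp_sem \<rho> e O rexp_sem \<rho> e ^^ Suc n"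
    by (simp only: rexp_pow.simps rexp_sem.simps Suc.IH)
  also have "\<dots> = rexp_sem \<rho> e ^^ Suc n O rexp_sem \<rho> e" by (rule relpow_commute)
  also have "\<dots> = rexp_sem \<rho> e ^^ Suc (Suc n)" by (simp only: relpow.simps(2))
  finally show ?case .
qed

lemma rexp_names_pow [simp]: "rexp_names (rexp_pow n e) = rexp_names e"
  by (induction n) auto

section \<open>Transitive closures as powers\<close>

lemma relpow_Suc_eq_trancl:
  assumes "finite R" and right_refl: "\<And>a b. (a, b) \<in> R \<Longrightarrow> (b, b) \<in> R" and "card R \<le> Suc n"
  shows "R ^^ Suc n = R\<^sup>+"
proof
  show "R ^^ Suc n \<subseteq> R\<^sup>+"
    using trancl_power by blast
  have mono: "R ^^ Suc k \<subseteq> R ^^ Suc (Suc k)" for k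
  proof (clarify)
    fix a b assume ab: "(a, b) \<in> R ^^ Suc k"
    then obtain c where "(c, b) \<in> R" by (rule relpow_Suc_E)
    then show "(a, b) \<in> R ^^ Suc (Suc k)" by (rule relpow_Suc_I[OF ab right_refl])
  qed
  show "R\<^sup>+ \<subseteq> R ^^ Suc n"
  proof
    fix p assume "p \<in> R\<^sup>+"
    then obtain m where m: "0 < m" "m \<le> card R" "p \<in> R ^^ m"
      using trancl_finite_eq_relpow[OF assms(1)] by auto
    have "m - 1 \<le> n" using m(2) assms(3) by linarith
    then have "R ^^ Suc (m - 1) \<subseteq> R ^^ Suc n"
      by (rule lift_Suc_mono_le[of "\<lambda>k. R ^^ Suc k", OF mono])
    then have "R ^^ m \<subseteq> R ^^ Suc n" by (simp only: Suc_diff_1[OF m(1)])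
    with m(3) show "p \<in> R ^^ Suc n" by blast
  qed
qed

lemma relpow_relcomp_eq_trancl_Un:
  assumes "finite C" and "A \<subseteq> C \<times> C" "B \<subseteq> C \<times> C" "Id_on C \<subseteq> A" "Id_on C \<subseteq> B"
    and "card (C \<times> C) \<le> Suc M"
  shows "(A O B) ^^ Suc M = (A \<union> B)\<^sup>+"
proof -
  have sub: "A O B \<subseteq> C \<times> C" using assms(2,3) by blast
  have fin: "finite (C \<times> C)" using assms(1) by simp
  have "(A O B) ^^ Suc M = (A O B)\<^sup>+"
  proof (rule relpow_Suc_eq_trancl)
    show "finite (A O B)" using finite_subset[OF sub fin] .
    show "(b, b) \<in> A O B" if "(a, b) \<in> A O B" for a b
    proof -
      have "b \<in> C" using that sub by auto
      then have "(b, b) \<in> A" "(b, b) \<in> B" using assms(4,5) by auto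
      then show ?thesis by auto
    qed
    show "card (A O B) \<le> Suc M" using card_mono[OF fin sub] assms(6) by linarith
  qed
  also have "\<dots> = (A \<union> B)\<^sup>+"
  proof (rule subset_antisym)
    have "A O B \<subseteq> (A \<union> B)\<^sup>+"
    proof (clarify)
      fix a c b assume "(a, c) \<in> A" "(c, b) \<in> B"
      then have "(a, c) \<in> (A \<union> B)\<^sup>+" "(c, b) \<in> A \<union> B" by auto
      then show "(a, b) \<in> (A \<union> B)\<^sup>+" by (rule trancl_into_trancl)
    qed
    then show "(A O B)\<^sup>+ \<subseteq> (A \<union> B)\<^sup>+"
      using trancl_mono_subset[of "A O B" "(A \<union> B)\<^sup>+"] by simp
    have "A \<union> B \<subseteq> A O B"
    proof (clarify)
      fix a b assume ab: "(a, b) \<in> A \<union> B"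
      then have "a \<in> C" "b \<in> C" using assms(2,3) by auto
      then have "(a, a) \<in> A" "(b, b) \<in> B" using assms(4,5) by auto
      with ab show "(a, b) \<in> A O B" by auto
    qed
    then show "(A \<union> B)\<^sup>+ \<subseteq> (A O B)\<^sup>+" by (rule trancl_mono_subset)
  qed
  finally show ?thesis .
qed

lemma alpha_bI:
  "c \<in> P // ga \<Longrightarrow> c' \<in> P // ga \<Longrightarrow> p \<in> b \<inter> c \<Longrightarrow> p' \<in> b \<inter> c' \<Longrightarrow> (p, p') \<in> al \<Longrightarrow>
    (c, c') \<in> alpha_b P al ga b"
  unfolding alpha_b_def by blast

lemma alpha_bE:
  assumes "(c, c') \<in> alpha_b P al ga b"
  obtains p p' where "c \<in> P // ga" "c' \<in> P // ga" "p \<in> b \<inter> c" "p' \<in> b \<inter> c'" "(p, p') \<in> al"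
  using assms unfolding alpha_b_def by blast

lemma alpha_b_equiv:
  assumes pent: "pentagon P al be ga" and b: "b \<in> P // be"
  shows "equiv (P // ga) (alpha_b P al ga b)"
proof (rule equivI)
  from pent have eq: "equiv P al" "equiv P be" "equiv P ga" "be \<inter> ga = Id_on P" "be O ga = P \<times> P"
    unfolding pentagon_def by auto
  have al_sym: "sym al" and al_trans: "trans al" and ga_sym: "sym ga"
    using eq(1,3) by (auto elim: equivE)
  show "alpha_b P al ga b \<subseteq> P // ga \<times> P // ga"
    by (auto simp: alpha_b_def)
  show "refl_on (P // ga) (alpha_b P al ga b)"
  proof (rule refl_onI)
    fix c assume c: "c \<in> P // ga"
    obtain x z where xz: "x \<in> b" "z \<in> c"
      using in_quotient_imp_non_empty[OF eq(2) b] in_quotient_imp_non_empty[OF eq(3) c] by blast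
    have "x \<in> P" "z \<in> P"
      using xz in_quotient_imp_subset[OF eq(2) b] in_quotient_imp_subset[OF eq(3) c] by auto
    then have "(x, z) \<in> be O ga" unfolding eq(5) by simp
    then obtain q where q: "(x, q) \<in> be" "(q, z) \<in> ga" by auto
    have "q \<in> b" using in_quotient_imp_closed[OF eq(2) b xz(1) q(1)] .
    moreover have "q \<in> c" using in_quotient_imp_closed[OF eq(3) c xz(2) symD[OF ga_sym q(2)]] .
    moreover have "(q, q) \<in> al"
      using \<open>q \<in> b\<close> in_quotient_imp_subset[OF eq(2) b] eq(1) by (auto elim: equivE dest: refl_onD)
    ultimately show "(c, c) \<in> alpha_b P al ga b" using alpha_bI[OF c c] by blast
  qed
  show "sym (alpha_b P al ga b)"
  proof (rule symI)
    fix c c' assume "(c, c') \<in> alpha_b P al ga b"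
    then obtain p p' where "c \<in> P // ga" "c' \<in> P // ga" "p \<in> b \<inter> c" "p' \<in> b \<inter> c'" "(p, p') \<in> al"
      by (rule alpha_bE)
    then show "(c', c) \<in> alpha_b P al ga b"
      by (intro alpha_bI[where p = p' and p' = p]) (auto dest: symD[OF al_sym])
  qed
  show "trans (alpha_b P al ga b)"
  proof (rule transI)
    fix c1 c2 c3 assume "(c1, c2) \<in> alpha_b P al ga b" "(c2, c3) \<in> alpha_b P al ga b"
    then obtain p1 p2 q2 q3 where p: "p1 \<in> b \<inter> c1" "p2 \<in> b \<inter> c2" "(p1, p2) \<in> al"
      and q: "q2 \<in> b \<inter> c2" "q3 \<in> b \<inter> c3" "(q2, q3) \<in> al"
      and c: "c1 \<in> P // ga" "c2 \<in> P // ga" "c3 \<in> P // ga"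
      by (auto elim!: alpha_bE)
    have "(p2, q2) \<in> be" using in_quotient_imp_in_rel[OF eq(2) b] p(2) q(1) by blast
    moreover have "(p2, q2) \<in> ga" using in_quotient_imp_in_rel[OF eq(3) c(2)] p(2) q(1) by blast
    ultimately have "(p2, q2) \<in> Id_on P" unfolding eq(4)[symmetric] by blast
    then have "p2 = q2" by (simp add: Id_on_iff)
    then have "(p1, q3) \<in> al" using transD[OF al_trans p(3)] q(3) by blast
    then show "(c1, c3) \<in> alpha_b P al ga b" by (rule alpha_bI[OF c(1) c(3) p(1) q(2)])
  qed
qed

lemma LP_equiv:
  assumes "pentagon P al be ga" and "m \<in> LP P al be ga"
  shows "equiv (P // ga) m"
  using assms(2)
proof (induction rule: LP.induct)
  case (gen b)
  then show ?case by (rule alpha_b_equiv[OF assms(1)])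
next
  case (meet x y)
  show ?case
  proof (rule equivI)
    show "x \<inter> y \<subseteq> P // ga \<times> P // ga" using meet.IH(1) equiv_type by blast
    show "refl_on (P // ga) (x \<inter> y)" using meet.IH unfolding equiv_def refl_on_def by blast
    show "sym (x \<inter> y)" using meet.IH by (simp add: equiv_def sym_Int)
    show "trans (x \<inter> y)" using meet.IH by (simp add: equiv_def trans_Int)
  qed
next
  case (join x y)
  show ?case
  proof (rule equivI)
    show "(x \<union> y)\<^sup>+ \<subseteq> P // ga \<times> P // ga"
      using join.IH equiv_type by (intro trancl_subset_Sigma) blast
    show "refl_on (P // ga) ((x \<union> y)\<^sup>+)"
      using join.IH(1) unfolding equiv_def refl_on_def by (blast intro: r_into_trancl')
    show "sym ((x \<union> y)\<^sup>+)" using join.IH by (simp add: equiv_def sym_trancl sym_Un)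
    show "trans ((x \<union> y)\<^sup>+)" by (rule trans_trancl)
  qed
qed

lemma finite_quotient_ga:
  assumes "pentagon P al be ga"
  shows "finite (P // ga)"
  using assms by (intro finite_quotient) (auto simp: pentagon_def elim: equivE)

lemma finite_LP:
  assumes "pentagon P al be ga"
  shows "finite (LP P al be ga)"
proof (rule finite_subset)
  show "LP P al be ga \<subseteq> Pow (P // ga \<times> P // ga)"
    using LP_equiv[OF assms] equiv_type by blast
  show "finite (Pow (P // ga \<times> P // ga))"
    using finite_quotient_ga[OF assms] by simp
qed

lemma LP_imp_quotient_nonempty: "m \<in> LP P al be ga \<Longrightarrow> P // be \<noteq> {}"
  by (induction rule: LP.induct) auto

section \<open>Uniform formula trees\<close>

text \<open>Leaf \<open>i\<close> of the \<open>j\<close>-th subtree is leaf \<open>4 * i + j\<close> of the whole tree.\<close>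

fun tree_val :: "('b \<Rightarrow> 'c rel) \<Rightarrow> nat \<Rightarrow> (nat \<Rightarrow> 'b) \<Rightarrow> 'c rel" where
  "tree_val A 0 p = A (p 0)"
| "tree_val A (Suc n) p =
     ((tree_val A n (\<lambda>i. p (4 * i)) \<inter> tree_val A n (\<lambda>i. p (4 * i + 1))) \<union>
      (tree_val A n (\<lambda>i. p (4 * i + 2)) \<inter> tree_val A n (\<lambda>i. p (4 * i + 3))))\<^sup>+"

definition interleave4 :: "(nat \<Rightarrow> 'b) \<Rightarrow> (nat \<Rightarrow> 'b) \<Rightarrow> (nat \<Rightarrow> 'b) \<Rightarrow> (nat \<Rightarrow> 'b) \<Rightarrow> nat \<Rightarrow> 'b" where
  "interleave4 p0 p1 p2 p3 k = ([p0, p1, p2, p3] ! (k mod 4)) (k div 4)"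

lemma interleave4_digit: "j < 4 \<Longrightarrow> (\<lambda>i. interleave4 p0 p1 p2 p3 (4 * i + j)) = [p0, p1, p2, p3] ! j"
  by (simp add: interleave4_def)

lemma range_interleave4:
  assumes "range p0 \<subseteq> S" "range p1 \<subseteq> S" "range p2 \<subseteq> S" "range p3 \<subseteq> S"
  shows "range (interleave4 p0 p1 p2 p3) \<subseteq> S"
proof (clarify)
  fix k :: nat
  have "k mod 4 \<in> {0, 1, 2, 3}" by auto
  then show "interleave4 p0 p1 p2 p3 k \<in> S"
    unfolding interleave4_def using assms by auto
qed

lemma tree_val_interleave4:
  "tree_val A (Suc n) (interleave4 p0 p1 p2 p3) =
     ((tree_val A n p0 \<inter> tree_val A n p1) \<union> (tree_val A n p2 \<inter> tree_val A n p3))\<^sup>+"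
  using interleave4_digit[of 0 p0 p1 p2 p3] interleave4_digit[of 1 p0 p1 p2 p3]
    interleave4_digit[of 2 p0 p1 p2 p3] interleave4_digit[of 3 p0 p1 p2 p3]
  by simp

lemma four_mult_add_less: "(i::nat) < 4 ^ n \<Longrightarrow> j < 4 \<Longrightarrow> 4 * i + j < 4 ^ Suc n"
  by simp

lemma tree_val_cong: "(\<And>i. i < 4 ^ n \<Longrightarrow> p i = q i) \<Longrightarrow> tree_val A n p = tree_val A n q"
proof (induction n arbitrary: p q)
  case 0
  then show ?case by simp
next
  case (Suc n)
  have "tree_val A n (\<lambda>i. p (4 * i + j)) = tree_val A n (\<lambda>i. q (4 * i + j))" if "j < 4" for j
    using Suc that by (intro Suc.IH) simp
  from this[of 0] this[of 1] this[of 2] this[of 3] show ?case by simp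
qed
lemma tree_val_LP:
  "(\<And>i. i < 4 ^ n \<Longrightarrow> p i \<in> P // be) \<Longrightarrow> tree_val (alpha_b P al ga) n p \<in> LP P al be ga"
proof (induction n arbitrary: p)
  case 0
  then show ?case by (simp add: LP.gen)
next
  case (Suc n)
  have "tree_val (alpha_b P al ga) n (\<lambda>i. p (4 * i + j)) \<in> LP P al be ga" if "j < 4" for j
    using Suc that by (intro Suc.IH) simp
  from this[of 0] this[of 1] this[of 2] this[of 3] show ?case by (simp add: LP.meet LP.join)
qed

definition tree_repr :: "'a set \<Rightarrow> ('a \<times> 'a) set \<Rightarrow> ('a \<times> 'a) set \<Rightarrow> ('a \<times> 'a) set \<Rightarrow> nat \<Rightarrow> 'a crel \<Rightarrow> bool" where
  "tree_repr P al be ga n m \<longleftrightarrow> (\<exists>p. range p \<subseteq> P // be \<and> tree_val (alpha_b P al ga) n p = m)"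

lemma tree_repr_Suc:
  assumes "tree_repr P al be ga n m" and "trans m"
  shows "tree_repr P al be ga (Suc n) m"
proof -
  obtain p where p: "range p \<subseteq> P // be" "tree_val (alpha_b P al ga) n p = m"
    using assms(1) unfolding tree_repr_def by blast
  have "tree_val (alpha_b P al ga) (Suc n) (interleave4 p p p p) = m"
    unfolding tree_val_interleave4 p(2) using assms(2) by simp
  moreover have "range (interleave4 p p p p) \<subseteq> P // be"
    by (intro range_interleave4 p(1))
  ultimately show ?thesis unfolding tree_repr_def by blast
qed

lemma tree_repr_mono:
  assumes "pentagon P al be ga" "m \<in> LP P al be ga" "tree_repr P al be ga n m" "n \<le> k"
  shows "tree_repr P al be ga k m"
  using assms(4,3)
proof (induction k rule: dec_induct)
  case base
  then show ?case .
next
  case (step k)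
  moreover have "trans m" using LP_equiv[OF assms(1,2)] by (auto elim: equivE)
  ultimately show ?case by (blast intro: tree_repr_Suc)
qed

lemma tree_repr_common_depth:
  assumes "pentagon P al be ga" "x \<in> LP P al be ga" "y \<in> LP P al be ga"
    and "tree_repr P al be ga n1 x" "tree_repr P al be ga n2 y"
  obtains n p q where "range p \<subseteq> P // be" "tree_val (alpha_b P al ga) n p = x"
    and "range q \<subseteq> P // be" "tree_val (alpha_b P al ga) n q = y"
proof -
  have "tree_repr P al be ga (max n1 n2) x"
    using tree_repr_mono[OF assms(1,2,4) max.cobounded1] .
  moreover have "tree_repr P al be ga (max n1 n2) y"
    using tree_repr_mono[OF assms(1,3,5) max.cobounded2] .
  ultimately show ?thesis using that unfolding tree_repr_def by blast
qed

lemma tree_repr_LP: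
  assumes "pentagon P al be ga" and "m \<in> LP P al be ga"
  shows "\<exists>n. tree_repr P al be ga n m"
  using assms(2)
proof (induction rule: LP.induct)
  case (gen b)
  then show ?case unfolding tree_repr_def by (intro exI[of _ 0] exI[of _ "\<lambda>_. b"]) auto
next
  case (meet x y)
  then obtain n p q where p: "range p \<subseteq> P // be" "tree_val (alpha_b P al ga) n p = x"
    and q: "range q \<subseteq> P // be" "tree_val (alpha_b P al ga) n q = y"
    using tree_repr_common_depth[OF assms(1)] by metis
  have "trans (x \<inter> y)"
    using LP_equiv[OF assms(1) LP.meet[OF meet.hyps]] by (auto elim: equivE)
  then have "tree_val (alpha_b P al ga) (Suc n) (interleave4 p q p q) = x \<inter> y"
    unfolding tree_val_interleave4 p(2) q(2) by simp
  moreover have "range (interleave4 p q p q) \<subseteq> P // be"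
    by (intro range_interleave4 p(1) q(1))
  ultimately show ?case unfolding tree_repr_def by blast
next
  case (join x y)
  then obtain n p q where p: "range p \<subseteq> P // be" "tree_val (alpha_b P al ga) n p = x"
    and q: "range q \<subseteq> P // be" "tree_val (alpha_b P al ga) n q = y"
    using tree_repr_common_depth[OF assms(1)] by metis
  have "tree_val (alpha_b P al ga) (Suc n) (interleave4 p p q q) = (x \<union> y)\<^sup>+"
    unfolding tree_val_interleave4 p(2) q(2) by simp
  moreover have "range (interleave4 p p q q) \<subseteq> P // be"
    by (intro range_interleave4 p(1) q(1))
  ultimately show ?case unfolding tree_repr_def by blast
qed

lemma uniform_tree_repr:
  assumes "pentagon P al be ga"
  shows "\<exists>N. \<forall>m \<in> LP P al be ga. tree_repr P al be ga N m"
proof -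
  obtain depth where depth: "\<forall>m \<in> LP P al be ga. tree_repr P al be ga (depth m) m"
    using tree_repr_LP[OF assms] by metis
  have "tree_repr P al be ga (Max (depth ` LP P al be ga)) m" if "m \<in> LP P al be ga" for m
  proof (rule tree_repr_mono[OF assms that])
    show "tree_repr P al be ga (depth m) m" using depth that by blast
    show "depth m \<le> Max (depth ` LP P al be ga)" using finite_LP[OF assms] that by simp
  qed
  then show ?thesis by blast
qed

section \<open>Lattice circuits as relation expressions\<close>

text \<open>
  A join is compiled as the \<open>(M + 1)\<close>-st power of a composition; this is correct on \<open>L(P)\<close>
  by \<open>relpow_relcomp_LP\<close> below.
\<close>

fun tree_rexp :: "nat \<Rightarrow> nat \<Rightarrow> (nat \<Rightarrow> 'w) \<Rightarrow> 'w rexp" where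
  "tree_rexp M 0 \<sigma> = RAtom (\<sigma> 0)"
| "tree_rexp M (Suc n) \<sigma> =
     rexp_pow M (RComp (RMeet (tree_rexp M n (\<lambda>i. \<sigma> (4 * i))) (tree_rexp M n (\<lambda>i. \<sigma> (4 * i + 1))))
                       (RMeet (tree_rexp M n (\<lambda>i. \<sigma> (4 * i + 2))) (tree_rexp M n (\<lambda>i. \<sigma> (4 * i + 3)))))"

fun circ_rexp :: "nat \<Rightarrow> nat \<Rightarrow> ('v \<Rightarrow> nat \<Rightarrow> 'w) \<Rightarrow> 'v circ \<Rightarrow> 'w rexp" where
  "circ_rexp M N leaf (CVar v) = tree_rexp M N (leaf v)"
| "circ_rexp M N leaf (CMeet a b) = RMeet (circ_rexp M N leaf a) (circ_rexp M N leaf b)"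
| "circ_rexp M N leaf (CJoin a b) = rexp_pow M (RComp (circ_rexp M N leaf a) (circ_rexp M N leaf b))"

lemma rexp_names_tree_rexp: "rexp_names (tree_rexp M n \<sigma>) \<subseteq> \<sigma> ` {..<4 ^ n}"
proof (induction n arbitrary: \<sigma>)
  case 0
  then show ?case by simp
next
  case (Suc n)
  have "rexp_names (tree_rexp M n (\<lambda>i. \<sigma> (4 * i + j))) \<subseteq> \<sigma> ` {..<4 ^ Suc n}" if "j < 4" for j
    using Suc.IH[of "\<lambda>i. \<sigma> (4 * i + j)"] four_mult_add_less[OF _ that] by blast
  from this[of 0] this[of 1] this[of 2] this[of 3] show ?case by simp
qed

lemma rexp_names_circ_rexp:
  "rexp_names (circ_rexp M N leaf c) \<subseteq> (\<Union>v \<in> circ_vars c. leaf v ` {..<4 ^ N})"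
  by (induction c) (use rexp_names_tree_rexp in fastforce)+

lemma circ_eval_cong: "(\<And>v. v \<in> circ_vars c \<Longrightarrow> f v = g v) \<Longrightarrow> circ_eval f c = circ_eval g c"
  by (induction c) auto

lemma circ_eval_LP: "(\<And>v. v \<in> circ_vars c \<Longrightarrow> f v \<in> LP P al be ga) \<Longrightarrow> circ_eval f c \<in> LP P al be ga"
  by (induction c) (auto intro: LP.meet LP.join)

definition pR_rel :: "'a set \<Rightarrow> ('a \<times> 'a) set \<Rightarrow> ('a \<times> 'a) set \<Rightarrow> ('a \<times> 'a) set \<Rightarrow> 'a set \<Rightarrow> 'a crel" where
  "pR_rel P al be ga b = {(c, c'). pR P al be ga b c c'}"

lemma pR_rel_subset: "pR_rel P al be ga b \<subseteq> P // ga \<times> P // ga"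
  by (auto simp: pR_rel_def pR_def)

lemma pR_rel_eq_alpha_b: "b \<in> P // be \<Longrightarrow> pR_rel P al be ga b = alpha_b P al ga b"
  by (auto simp: pR_rel_def pR_def alpha_b_def)

context
  fixes P :: "'a set" and al be ga :: "('a \<times> 'a) set" and M :: nat
  assumes pent: "pentagon P al be ga" and M: "card (P // ga \<times> P // ga) \<le> Suc M"
begin

lemma relpow_relcomp_LP:
  assumes "x \<in> LP P al be ga" "y \<in> LP P al be ga"
  shows "(x O y) ^^ Suc M = (x \<union> y)\<^sup>+"
  using LP_equiv[OF pent assms(1)] LP_equiv[OF pent assms(2)]
  by (intro relpow_relcomp_eq_trancl_Un[OF finite_quotient_ga[OF pent] _ _ _ _ M])
    (auto elim!: equivE dest: refl_onD)

lemma rexp_sem_tree_rexp: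
  assumes "\<And>i. i < 4 ^ n \<Longrightarrow> h (\<sigma> i) \<in> P // be"
  shows "rexp_sem (\<lambda>x. pR_rel P al be ga (h x)) (tree_rexp M n \<sigma>) =
    tree_val (alpha_b P al ga) n (\<lambda>i. h (\<sigma> i))"
  using assms
proof (induction n arbitrary: \<sigma>)
  case 0
  then show ?case by (simp add: pR_rel_eq_alpha_b)
next
  case (Suc n)
  let ?sem = "rexp_sem (\<lambda>x. pR_rel P al be ga (h x))"
  let ?t = "\<lambda>j. tree_val (alpha_b P al ga) n (\<lambda>i. h (\<sigma> (4 * i + j)))"
  have t: "?sem (tree_rexp M n (\<lambda>i. \<sigma> (4 * i + j))) = ?t j" "?t j \<in> LP P al be ga"
    if "j < 4" for j
  proof -
    have leaves: "h (\<sigma> (4 * i + j)) \<in> P // be" if "i < 4 ^ n" for i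
      using Suc.prems four_mult_add_less[OF that \<open>j < 4\<close>] .
    show "?sem (tree_rexp M n (\<lambda>i. \<sigma> (4 * i + j))) = ?t j"
      using Suc.IH[of "\<lambda>i. \<sigma> (4 * i + j)"] leaves by blast
    show "?t j \<in> LP P al be ga"
      using leaves by (rule tree_val_LP)
  qed
  have "?sem (tree_rexp M (Suc n) \<sigma>) = ((?t 0 \<inter> ?t 1) O (?t 2 \<inter> ?t 3)) ^^ Suc M"
    using t(1)[of 0] t(1)[of 1] t(1)[of 2] t(1)[of 3]
    by (simp del: relpow.simps add: rexp_sem_pow)
  also have "\<dots> = ((?t 0 \<inter> ?t 1) \<union> (?t 2 \<inter> ?t 3))\<^sup>+"
    using t(2)[of 0] t(2)[of 1] t(2)[of 2] t(2)[of 3] by (intro relpow_relcomp_LP LP.meet) simp_all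
  also have "\<dots> = tree_val (alpha_b P al ga) (Suc n) (\<lambda>i. h (\<sigma> i))" by simp
  finally show ?case .
qed

lemma rexp_sem_circ_rexp:
  assumes "\<And>v i. v \<in> circ_vars c \<Longrightarrow> i < 4 ^ N \<Longrightarrow> h (leaf v i) \<in> P // be"
  shows "rexp_sem (\<lambda>x. pR_rel P al be ga (h x)) (circ_rexp M N leaf c) =
    circ_eval (\<lambda>v. tree_val (alpha_b P al ga) N (\<lambda>i. h (leaf v i))) c"
  using assms
proof (induction c)
  case (CVar v)
  then show ?case by (simp add: rexp_sem_tree_rexp)
next
  case (CMeet a b)
  then show ?case by simp
next
  case (CJoin a b)
  let ?sem = "rexp_sem (\<lambda>x. pR_rel P al be ga (h x))"
  let ?ev = "circ_eval (\<lambda>v. tree_val (alpha_b P al ga) N (\<lambda>i. h (leaf v i)))"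
  have ev: "?sem (circ_rexp M N leaf d) = ?ev d" "?ev d \<in> LP P al be ga" if "d \<in> {a, b}" for d
    using CJoin that by (auto intro!: circ_eval_LP tree_val_LP)
  have "?sem (circ_rexp M N leaf (CJoin a b)) = (?ev a O ?ev b) ^^ Suc M"
    using ev(1)[of a] ev(1)[of b] by (simp del: relpow.simps add: rexp_sem_pow)
  also have "\<dots> = ?ev (CJoin a b)"
    using relpow_relcomp_LP[OF ev(2)[of a] ev(2)[of b]] by simp
  finally show ?case .
qed

end

section \<open>The reduction\<close>

text \<open>
  The three kinds of target variables are told apart by their second component mod 3. The
  first component \<open>v0\<close> of class and midpoint variables is an arbitrary lattice variable, needed
  only because all target variables have type \<open>'v \<times> nat\<close>.
\<close>

definition leaf_var :: "'v \<Rightarrow> nat \<Rightarrow> 'v \<times> nat" where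
  "leaf_var v i = (v, 3 * i)"

definition class_var :: "'v \<Rightarrow> nat \<Rightarrow> 'v \<times> nat" where
  "class_var v0 j = (v0, 3 * j + 1)"

definition mid_var :: "'v \<Rightarrow> nat list \<Rightarrow> 'v \<times> nat" where
  "mid_var v0 q = (v0, 3 * list_encode q + 2)"

lemma inj_mid_var: "inj (mid_var v0)"
  using inj_list_encode by (auto simp: inj_def mid_var_def)

lemma leaf_var_eq_iff [simp]: "leaf_var v i = leaf_var w j \<longleftrightarrow> v = w \<and> i = j"
  by (auto simp: leaf_var_def)

lemma class_var_eq_iff [simp]: "class_var v i = class_var w j \<longleftrightarrow> v = w \<and> i = j"
  by (auto simp: class_var_def)

lemma leaf_var_neq_class_var [simp]:
  "leaf_var v i \<noteq> class_var v0 j" "class_var v0 j \<noteq> leaf_var v i"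
  by (auto simp: leaf_var_def class_var_def) presburger+

lemma leaf_var_neq_mid_var [simp]:
  "leaf_var v i \<noteq> mid_var v0 q" "mid_var v0 q \<noteq> leaf_var v i"
  by (auto simp: leaf_var_def mid_var_def) presburger+

lemma class_var_neq_mid_var [simp]:
  "class_var v j \<noteq> mid_var v0 q" "mid_var v0 q \<noteq> class_var v j"
  by (auto simp: class_var_def mid_var_def) presburger+

definition index_pairs :: "'b list \<Rightarrow> ('b \<times> 'b) set \<Rightarrow> (nat \<times> nat) list" where
  "index_pairs cs ell =
     [(i, j). i \<leftarrow> [0..<length cs], j \<leftarrow> [0..<length cs], (cs ! i, cs ! j) \<in> ell]"

lemma set_index_pairs:
  "set (index_pairs cs ell) = {(i, j). i < length cs \<and> j < length cs \<and> (cs ! i, cs ! j) \<in> ell}"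
  by (auto simp: index_pairs_def)

definition reduce_inst :: "nat \<Rightarrow> nat \<Rightarrow> 'a set list \<Rightarrow> ('v, 'a) lat_inst \<Rightarrow> ('v \<times> nat) pent_inst" where
  "reduce_inst M N cs I =
    (let v0 = SOME v. v \<in> LV I; E = circ_rexp M N leaf_var (LC I); ps = index_pairs cs (Lell I) in
     \<lparr>PX = (\<lambda>(v, i). leaf_var v i) ` (LV I \<times> {..<4 ^ N}),
      PY = class_var v0 ` {..<length cs},
      PEX = {},
      PEY = (\<Union>n < length ps. mid_var v0 ` rexp_midpoints E [n]),
      Patoms = concat (map (\<lambda>n. rexp_atoms (mid_var v0) E
                 (class_var v0 (fst (ps ! n))) (class_var v0 (snd (ps ! n))) [n]) [0..<length ps]),
      Pw = (\<lambda>(v, k). if k mod 3 = 0 then Lw I v / (2 * 4 ^ N)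
                    else if k mod 3 = 1 then 1 / (2 * real (length cs)) else 0)\<rparr>)"

definition reduce_dec :: "'a set list \<Rightarrow> ('a crel \<Rightarrow> nat \<Rightarrow> 'a set) \<Rightarrow> ('v \<Rightarrow> 'a crel) \<Rightarrow> 'v \<times> nat \<Rightarrow> 'a set" where
  "reduce_dec cs enc f w = (if snd w mod 3 = 0 then enc (f (fst w)) (snd w div 3) else cs ! (snd w div 3))"

lemma reduce_dec_leaf_var [simp]: "reduce_dec cs enc f (leaf_var v i) = enc (f v) i"
  by (simp add: reduce_dec_def leaf_var_def)

lemma reduce_dec_class_var [simp]: "reduce_dec cs enc f (class_var v0 j) = cs ! j"
proof -
  have "(3 * j + 1) mod 3 = 1" "(3 * j + 1) div 3 = j" by presburger+
  then show ?thesis by (simp add: reduce_dec_def class_var_def)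
qed

lemma deterministic_linear_reduction:
  fixes P :: "'a set" and al be ga :: "('a \<times> 'a) set"
    and inst :: "('v, 'a) lat_inst \<Rightarrow> ('v \<times> nat) pent_inst"
    and dec :: "('v \<Rightarrow> 'a crel) \<Rightarrow> ('v \<times> nat) \<Rightarrow> 'a set"
  defines "L \<equiv> LP P al be ga"
  assumes "c0 > 0" "c1 > 0"
    and size: "\<And>I. lat_valid L D I \<Longrightarrow> pent_valid (inst I) \<and>
      real (card (PX (inst I) \<union> PY (inst I))) \<le> c0 * real (card (LV I)) \<and>
      (\<forall>w \<in> PX (inst I) \<union> PY (inst I). \<exists>Q \<subseteq> LV I. card Q \<le> k \<and>
         (\<forall>f g. (\<forall>q \<in> Q. f q = g q) \<longrightarrow> dec f w = dec g w))"
    and sat: "\<And>I f. lat_valid L D I \<Longrightarrow> lat_assign L I f \<Longrightarrow>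
      pent_assign P be ga (inst I) (dec f) \<and> (lat_sat L I f \<longrightarrow> pent_sat P al be ga (inst I) (dec f))"
    and dist: "\<And>I f \<epsilon>. lat_valid L D I \<Longrightarrow> lat_assign L I f \<Longrightarrow> 0 < \<epsilon> \<Longrightarrow> \<epsilon> < 1 \<Longrightarrow>
      lat_dist L I f \<ge> ereal \<epsilon> \<Longrightarrow> pent_dist P al be ga (inst I) (dec f) \<ge> ereal (c1 * \<epsilon>)"
  shows "linear_reduction P al be ga D (\<lambda>I. return_pmf (inst I, dec))"
  unfolding linear_reduction_def
  using assms(2,3) size sat dist unfolding L_def by (intro exI[of _ c0] exI[of _ c1] exI[of _ k]) auto

locale lattice_encoding =
  fixes P :: "'a set" and al be ga :: "('a \<times> 'a) set" and M N :: nat and cs :: "'a set list"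
    and enc :: "'a crel \<Rightarrow> nat \<Rightarrow> 'a set"
  assumes pent: "pentagon P al be ga"
    and M: "card (P // ga \<times> P // ga) \<le> Suc M"
    and cs: "set cs = P // ga"
    and enc: "\<And>m. m \<in> LP P al be ga \<Longrightarrow> range (enc m) \<subseteq> P // be \<and> tree_val (alpha_b P al ga) N (enc m) = m"
begin

abbreviation "L \<equiv> LP P al be ga"
abbreviation "dec \<equiv> reduce_dec cs enc"

lemma enc_leaf: "m \<in> L \<Longrightarrow> enc m i \<in> P // be"
  using enc by blast

lemma tree_val_enc: "m \<in> L \<Longrightarrow> tree_val (alpha_b P al ga) N (enc m) = m"
  using enc by blast

context
  fixes D :: real and I :: "('v, 'a) lat_inst"
  assumes I: "lat_valid L D I"
begin

abbreviation "v0 \<equiv> SOME v. v \<in> LV I"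
abbreviation "E \<equiv> circ_rexp M N leaf_var (LC I)"
abbreviation "ps \<equiv> index_pairs cs (Lell I)"
abbreviation "I' \<equiv> reduce_inst M N cs I :: ('v \<times> nat) pent_inst"
abbreviation "pair_atoms n \<equiv>
  rexp_atoms (mid_var v0) E (class_var v0 (fst (ps ! n))) (class_var v0 (snd (ps ! n))) [n]"

lemma PX_I': "PX I' = (\<lambda>(v, i). leaf_var v i) ` (LV I \<times> {..<4 ^ N})"
  by (simp add: reduce_inst_def Let_def)

lemma PY_I': "PY I' = class_var v0 ` {..<length cs}"
  by (simp add: reduce_inst_def Let_def)

lemma PEX_I': "PEX I' = {}"
  by (simp add: reduce_inst_def Let_def)

lemma PEY_I': "PEY I' = (\<Union>n < length ps. mid_var v0 ` rexp_midpoints E [n])"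
  by (simp add: reduce_inst_def Let_def)

lemma Patoms_I': "set (Patoms I') = (\<Union>n < length ps. set (pair_atoms n))"
  by (auto simp: reduce_inst_def Let_def)

lemma Pw_leaf_var: "Pw I' (leaf_var v i) = Lw I v / (2 * 4 ^ N)"
  by (simp add: reduce_inst_def Let_def leaf_var_def)

lemma Pw_class_var: "Pw I' (class_var v j) = 1 / (2 * real (length cs))"
proof -
  have "(3 * j + 1) mod 3 = 1" by presburger
  then show ?thesis by (simp add: reduce_inst_def Let_def class_var_def)
qed

lemma finite_LV: "finite (LV I)"
  using I by (simp add: lat_valid_def)

lemma LV_nonempty: "LV I \<noteq> {}"
  using I by (auto simp: lat_valid_def)

lemma vars_LC: "circ_vars (LC I) \<subseteq> LV I"
  using I by (simp add: lat_valid_def)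

lemma Lell_LP: "Lell I \<in> L"
  using I by (simp add: lat_valid_def)

lemma Lw_bounds: "v \<in> LV I \<Longrightarrow> 0 \<le> Lw I v \<and> Lw I v \<le> 1"
  using I by (simp add: lat_valid_def)

lemma cs_nonempty: "0 < length cs"
  using LP_imp_quotient_nonempty[OF Lell_LP] cs by auto

lemma one_le_length_cs: "1 \<le> real (length cs)"
proof -
  have "Suc 0 \<le> length cs" using cs_nonempty by (rule Suc_leI)
  then show ?thesis by simp
qed

lemma ps_nth:
  assumes "n < length ps"
  shows "fst (ps ! n) < length cs" "snd (ps ! n) < length cs"
    "(cs ! fst (ps ! n), cs ! snd (ps ! n)) \<in> Lell I"
proof -
  have "ps ! n \<in> set ps" using assms by simp
  then show "fst (ps ! n) < length cs" "snd (ps ! n) < length cs"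
    "(cs ! fst (ps ! n), cs ! snd (ps ! n)) \<in> Lell I"
    by (auto simp: set_index_pairs)
qed

lemma Patoms_vars:
  assumes "(x, y, y') \<in> set (Patoms I')"
  shows "x \<in> PX I'" "y \<in> PY I' \<union> PEY I'" "y' \<in> PY I' \<union> PEY I'"
proof -
  obtain n where n: "n < length ps" and a: "(x, y, y') \<in> set (pair_atoms n)"
    using assms Patoms_I' by auto
  have "x \<in> rexp_names E" using set_rexp_atoms[OF a] by blast
  then show "x \<in> PX I'"
    using rexp_names_circ_rexp[of M N leaf_var "LC I"] vars_LC unfolding PX_I' by blast
  have "class_var v0 (fst (ps ! n)) \<in> PY I'" "class_var v0 (snd (ps ! n)) \<in> PY I'"
    using ps_nth[OF n] by (auto simp: PY_I')
  moreover have "mid_var v0 ` rexp_midpoints E [n] \<subseteq> PEY I'" using n by (auto simp: PEY_I')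
  ultimately show "y \<in> PY I' \<union> PEY I'" "y' \<in> PY I' \<union> PEY I'"
    using set_rexp_atoms[OF a] by blast+
qed

lemma PX_PY_disjoint: "PX I' \<inter> PY I' = {}"
  by (auto simp: PX_I' PY_I' leaf_var_neq_class_var)

lemma finite_PX: "finite (PX I')"
  using finite_LV by (simp add: PX_I')

lemma Pw_nonneg: "w \<in> PX I' \<union> PY I' \<Longrightarrow> 0 \<le> Pw I' w"
  using Lw_bounds by (auto simp: PX_I' PY_I' Pw_leaf_var Pw_class_var)

lemma sum_Pw_PX: "sum (Pw I') (PX I') = 1 / 2"
proof -
  have "inj_on (\<lambda>(v, i). leaf_var v i) (LV I \<times> {..<4 ^ N})"
    by (auto simp: inj_on_def)
  then have "sum (Pw I') (PX I') = (\<Sum>(v, i) \<in> LV I \<times> {..<(4::nat) ^ N}. Lw I v / (2 * 4 ^ N))"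
    unfolding PX_I' by (simp add: sum.reindex case_prod_beta' Pw_leaf_var)
  also have "\<dots> = (\<Sum>v \<in> LV I. \<Sum>i < (4::nat) ^ N. Lw I v / (2 * 4 ^ N))"
    by (simp only: sum.cartesian_product)
  also have "\<dots> = sum (Lw I) (LV I) / 2"
    by (simp add: sum_divide_distrib)
  also have "\<dots> = 1 / 2" using I by (simp add: lat_valid_def)
  finally show ?thesis .
qed

lemma sum_Pw_PY: "sum (Pw I') (PY I') = 1 / 2"
proof -
  have "sum (Pw I') (PY I') = (\<Sum>j < length cs. Pw I' (class_var v0 j))"
    unfolding PY_I' by (rule sum.reindex_cong[where l = "class_var v0"]) (auto simp: inj_on_def)
  also have "\<dots> = 1 / 2" using cs_nonempty by (simp add: Pw_class_var)
  finally show ?thesis .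
qed

lemma reduce_valid: "pent_valid I'"
proof -
  have disj: "PX I' \<inter> PEY I' = {}" "PY I' \<inter> PEY I' = {}"
    by (auto simp: PX_I' PY_I' PEY_I' leaf_var_neq_mid_var class_var_neq_mid_var)
  have fin: "finite (PY I')" "finite (PEY I')"
    by (auto simp: PY_I' PEY_I' finite_rexp_midpoints)
  have weights: "\<forall>w \<in> PX I' \<union> PY I'. 0 \<le> Pw I' w \<and> Pw I' w \<le> 1"
  proof
    fix w assume w: "w \<in> PX I' \<union> PY I'"
    have "(1::real) \<le> 2 * 4 ^ N" using one_le_power[of "4::real" N] by linarith
    then have "Lw I v / (2 * 4 ^ N) \<le> 1" if "v \<in> LV I" for v
      using Lw_bounds[OF that] by (simp add: divide_le_eq)
    moreover have "1 / (2 * real (length cs)) \<le> 1"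
      using one_le_length_cs by (simp add: divide_le_eq)
    ultimately show "0 \<le> Pw I' w \<and> Pw I' w \<le> 1"
      using w Pw_nonneg by (auto simp: PX_I' PY_I' Pw_leaf_var Pw_class_var)
  qed
  have "sum (Pw I') (PX I' \<union> PY I') = sum (Pw I') (PX I') + sum (Pw I') (PY I')"
    by (rule sum.union_disjoint[OF finite_PX fin(1) PX_PY_disjoint])
  then have sum: "sum (Pw I') (PX I' \<union> PY I') = 1" using sum_Pw_PX sum_Pw_PY by simp
  have atoms: "\<forall>(x, y, y') \<in> set (Patoms I'). x \<in> PX I' \<union> PEX I' \<and> y \<in> PY I' \<union> PEY I' \<and> y' \<in> PY I' \<union> PEY I'"
    using Patoms_vars by blast
  show ?thesis
    unfolding pent_valid_def using finite_PX fin disj PX_PY_disjoint atoms weights sum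
    by (simp add: PEX_I')
qed

lemma reduce_card: "real (card (PX I' \<union> PY I')) \<le> real (4 ^ N + length cs) * real (card (LV I))"
proof -
  have "card (PX I') \<le> 4 ^ N * card (LV I)"
    unfolding PX_I'
    using card_image_le[OF finite_cartesian_product[OF finite_LV finite_lessThan[of "4 ^ N"]],
        of "\<lambda>(v, i). leaf_var v i"]
    by (simp add: card_cartesian_product mult.commute)
  moreover have "card (PY I') \<le> length cs * card (LV I)"
  proof -
    have "card (PY I') \<le> length cs" unfolding PY_I' using card_image_le by fastforce
    moreover have "1 \<le> card (LV I)" using finite_LV LV_nonempty by (simp add: Suc_le_eq card_gt_0_iff)
    ultimately show ?thesis by (metis le_trans mult.right_neutral mult_le_mono2)
  qed
  ultimately have "card (PX I' \<union> PY I') \<le> (4 ^ N + length cs) * card (LV I)"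
    using card_Un_le[of "PX I'" "PY I'"] by (simp add: add_mult_distrib)
  then show ?thesis by (metis of_nat_le_iff of_nat_mult)
qed

lemma reduce_local:
  assumes "w \<in> PX I' \<union> PY I'"
  shows "\<exists>Q \<subseteq> LV I. card Q \<le> 1 \<and> (\<forall>f g. (\<forall>q \<in> Q. f q = g q) \<longrightarrow> dec f w = dec g w)"
  using assms
proof
  assume "w \<in> PX I'"
  then obtain v i where "w = leaf_var v i" "v \<in> LV I" by (auto simp: PX_I')
  then show ?thesis by (intro exI[of _ "{v}"]) auto
next
  assume "w \<in> PY I'"
  then obtain j where "w = class_var v0 j" by (auto simp: PY_I')
  then show ?thesis by (intro exI[of _ "{}"]) auto
qed

lemma reduce_assign:
  assumes "lat_assign L I f"
  shows "pent_assign P be ga I' (dec f)"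
  using assms cs nth_mem
  by (fastforce simp: pent_assign_def lat_assign_def PX_I' PY_I' intro: enc_leaf)

lemma rexp_sem_encoding:
  assumes "lat_assign L I f"
  shows "rexp_sem (\<lambda>x. pR_rel P al be ga (dec f x)) E = circ_eval f (LC I)"
proof -
  have f_L: "f v \<in> L" if "v \<in> LV I" for v
    using assms that by (auto simp: lat_assign_def)
  have "rexp_sem (\<lambda>x. pR_rel P al be ga (dec f x)) E =
      circ_eval (\<lambda>v. tree_val (alpha_b P al ga) N (\<lambda>i. dec f (leaf_var v i))) (LC I)"
    using f_L vars_LC by (intro rexp_sem_circ_rexp[OF pent M]) (auto intro: enc_leaf)
  also have "\<dots> = circ_eval f (LC I)"
    using f_L vars_LC by (intro circ_eval_cong) (auto simp: tree_val_enc)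
  finally show ?thesis .
qed

abbreviation "midpoint_witness f n W \<equiv> W ` rexp_midpoints E [n] \<subseteq> P // ga \<and>
  (\<forall>h. h (class_var v0 (fst (ps ! n))) = cs ! fst (ps ! n) \<longrightarrow>
       h (class_var v0 (snd (ps ! n))) = cs ! snd (ps ! n) \<longrightarrow>
       (\<forall>q \<in> rexp_midpoints E [n]. h (mid_var v0 q) = W q) \<longrightarrow>
       atoms_hold (\<lambda>x. pR_rel P al be ga (dec f x)) h (pair_atoms n))"

lemma midpoint_witness_exists:
  assumes "lat_sat L I f" and "n < length ps"
  shows "\<exists>W. midpoint_witness f n W"
  using ps_nth(3)[OF assms(2)] assms(1) rexp_sem_encoding pR_rel_subset[of P al be ga]
  by (intro rexp_atoms_complete[where S = "P // ga"]) (auto simp: lat_sat_def)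

lemma reduce_sat:
  assumes f: "lat_sat L I f"
  shows "pent_sat P al be ga I' (dec f)"
proof -
  obtain W where W: "\<And>n. n < length ps \<Longrightarrow> midpoint_witness f n (W n)"
    using midpoint_witness_exists[OF f] by metis
  txt \<open>All midpoint positions of the \<open>n\<close>-th pair end in \<open>n\<close>, so \<open>h\<close> reads the pair off the position.\<close>
  define h where "h w = (if w \<in> range (mid_var v0)
      then W (last (inv (mid_var v0) w)) (inv (mid_var v0) w) else dec f w)" for w
  have h_mid: "h (mid_var v0 q) = W n q" if "q \<in> rexp_midpoints E [n]" for n q
  proof -
    have "last q = n" using rexp_midpoints_suffix[OF that] by (auto simp: suffix_def)
    then show ?thesis by (simp add: h_def inv_f_f[OF inj_mid_var])
  qed
  have h_leaf: "h (leaf_var v i) = dec f (leaf_var v i)" for v i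
    by (auto simp: h_def)
  have h_class: "h (class_var v0 j) = cs ! j" for j
    by (auto simp: h_def)
  show ?thesis unfolding pent_sat_def
  proof (intro conjI exI[of _ h])
    show "pent_assign P be ga I' (dec f)"
      using f by (intro reduce_assign) (simp add: lat_sat_def)
    show "\<forall>w \<in> PX I' \<union> PY I'. h w = dec f w"
      by (auto simp: PX_I' PY_I' h_leaf h_class)
    show "\<forall>x \<in> PEX I'. h x \<in> P // be" by (simp add: PEX_I')
    show "\<forall>y \<in> PEY I'. h y \<in> P // ga"
      using W h_mid by (fastforce simp: PEY_I')
    show "\<forall>(x, y, y') \<in> set (Patoms I'). pR P al be ga (h x) (h y) (h y')"
    proof (clarify)
      fix x y y' assume a: "(x, y, y') \<in> set (Patoms I')"
      then obtain n where n: "n < length ps" "(x, y, y') \<in> set (pair_atoms n)"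
        by (auto simp: Patoms_I')
      have "atoms_hold (\<lambda>x. pR_rel P al be ga (dec f x)) h (pair_atoms n)"
        using W[OF n(1)] h_mid h_class by blast
      then have "(h y, h y') \<in> pR_rel P al be ga (dec f x)"
        using n(2) by (auto simp: atoms_hold_def)
      moreover have "h x = dec f x" using Patoms_vars(1)[OF a] by (auto simp: PX_I' h_leaf)
      ultimately show "pR P al be ga (h x) (h y) (h y')" by (simp add: pR_rel_def)
    qed
  qed
qed

lemma decode_sat:
  assumes h: "pent_sat P al be ga I' h" and classes: "\<And>j. j < length cs \<Longrightarrow> h (class_var v0 j) = cs ! j"
  shows "lat_sat L I (\<lambda>v. tree_val (alpha_b P al ga) N (\<lambda>i. h (leaf_var v i)))"
proof -
  let ?g = "\<lambda>v. tree_val (alpha_b P al ga) N (\<lambda>i. h (leaf_var v i))"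
  obtain H where H_eq: "\<forall>w \<in> PX I' \<union> PY I'. H w = h w"
    and H_atoms: "\<forall>(x, y, y') \<in> set (Patoms I'). pR P al be ga (H x) (H y) (H y')"
    using h by (auto simp: pent_sat_def)
  have leaves: "h (leaf_var v i) \<in> P // be" if "v \<in> LV I" "i < 4 ^ N" for v i
    using h that by (auto simp: pent_sat_def pent_assign_def PX_I')
  have H_leaf: "H (leaf_var v i) = h (leaf_var v i)" if "v \<in> LV I" "i < 4 ^ N" for v i
    using H_eq that by (auto simp: PX_I')
  have H_class: "H (class_var v0 j) = cs ! j" if "j < length cs" for j
    using H_eq that classes by (auto simp: PY_I')
  have "lat_assign L I ?g"
    using leaves by (auto simp: lat_assign_def intro!: tree_val_LP)
  moreover have "Lell I \<subseteq> circ_eval ?g (LC I)"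
  proof (clarify)
    fix c c' assume cc: "(c, c') \<in> Lell I"
    then have "c \<in> set cs" "c' \<in> set cs"
      using LP_equiv[OF pent Lell_LP] cs by (auto elim!: equivE)
    then obtain i j where ij: "i < length cs" "cs ! i = c" "j < length cs" "cs ! j = c'"
      by (auto simp: in_set_conv_nth)
    with cc have "(i, j) \<in> set ps" by (auto simp: set_index_pairs)
    then obtain n where n: "n < length ps" "ps ! n = (i, j)" by (auto simp: in_set_conv_nth)
    have "atoms_hold (\<lambda>x. pR_rel P al be ga (H x)) H (pair_atoms n)"
      using H_atoms n(1) by (auto simp: atoms_hold_def Patoms_I' pR_rel_def)
    then have "(H (class_var v0 i), H (class_var v0 j)) \<in> rexp_sem (\<lambda>x. pR_rel P al be ga (H x)) E"
      using rexp_atoms_sound n(2) by fastforce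
    also have "rexp_sem (\<lambda>x. pR_rel P al be ga (H x)) E =
        circ_eval (\<lambda>v. tree_val (alpha_b P al ga) N (\<lambda>i. H (leaf_var v i))) (LC I)"
      using vars_LC leaves H_leaf by (intro rexp_sem_circ_rexp[OF pent M]) auto
    also have "\<dots> = circ_eval ?g (LC I)"
      using vars_LC H_leaf by (intro circ_eval_cong tree_val_cong) auto
    finally show "(c, c') \<in> circ_eval ?g (LC I)" using H_class ij by simp
  qed
  ultimately show ?thesis by (simp add: lat_sat_def)
qed

lemma sum_Lw_le_sum_Pw:
  assumes "T \<subseteq> LV I" "S \<subseteq> PX I' \<union> PY I'" and hit: "\<And>v. v \<in> T \<Longrightarrow> \<exists>i < 4 ^ N. leaf_var v i \<in> S"
  shows "sum (Lw I) T \<le> 2 * 4 ^ N * sum (Pw I') S"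
proof -
  obtain \<iota> where \<iota>: "\<And>v. v \<in> T \<Longrightarrow> leaf_var v (\<iota> v) \<in> S" using hit by metis
  have inj: "inj_on (\<lambda>v. leaf_var v (\<iota> v)) T" by (auto simp: inj_on_def)
  have fin: "finite S" using assms(2) finite_PX finite_subset by (auto simp: PY_I')
  have "sum (Lw I) T = 2 * 4 ^ N * (\<Sum>v \<in> T. Pw I' (leaf_var v (\<iota> v)))"
    by (simp add: Pw_leaf_var sum_distrib_left)
  also have "(\<Sum>v \<in> T. Pw I' (leaf_var v (\<iota> v))) = sum (Pw I') ((\<lambda>v. leaf_var v (\<iota> v)) ` T)"
    by (simp add: sum.reindex[OF inj])
  also have "\<dots> \<le> sum (Pw I') S"
    using \<iota> assms(2) Pw_nonneg by (intro sum_mono2[OF fin]) auto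
  finally show ?thesis by simp
qed

lemma lat_dist_le_changed_leaves:
  assumes f: "lat_assign L I f" and h: "pent_sat P al be ga I' h"
    and classes: "\<And>j. j < length cs \<Longrightarrow> h (class_var v0 j) = cs ! j"
  shows "lat_dist L I f \<le> ereal (2 * 4 ^ N * sum (Pw I') {w \<in> PX I' \<union> PY I'. dec f w \<noteq> h w})"
proof -
  let ?g = "\<lambda>v. tree_val (alpha_b P al ga) N (\<lambda>i. h (leaf_var v i))"
  let ?S = "{w \<in> PX I' \<union> PY I'. dec f w \<noteq> h w}"
  define T where "T = {v \<in> LV I. f v \<noteq> ?g v}"
  have "ereal (sum (Lw I) T) \<in> {ereal (sum (Lw I) {v \<in> LV I. f v \<noteq> g v}) | g. lat_sat L I g}"
    unfolding T_def using decode_sat[OF h classes] by (intro CollectI exI[of _ ?g]) simp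
  then have "lat_dist L I f \<le> ereal (sum (Lw I) T)"
    unfolding lat_dist_def by (rule Inf_lower)
  also have "sum (Lw I) T \<le> 2 * 4 ^ N * sum (Pw I') ?S"
  proof (rule sum_Lw_le_sum_Pw)
    show "T \<subseteq> LV I" "?S \<subseteq> PX I' \<union> PY I'" by (auto simp: T_def)
    show "\<exists>i < 4 ^ N. leaf_var v i \<in> ?S" if "v \<in> T" for v
    proof (rule ccontr)
      assume "\<not> ?thesis"
      then have "\<forall>i < 4 ^ N. enc (f v) i = h (leaf_var v i)"
        using that by (auto simp: T_def PX_I')
      then have "tree_val (alpha_b P al ga) N (enc (f v)) = ?g v" by (intro tree_val_cong) auto
      then show False using that f tree_val_enc by (auto simp: T_def lat_assign_def)
    qed
  qed
  finally show ?thesis by simp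
qed

lemma reduce_dist:
  assumes f: "lat_assign L I f" and \<epsilon>: "0 < \<epsilon>" "\<epsilon> < 1" and far: "lat_dist L I f \<ge> ereal \<epsilon>"
  shows "pent_dist P al be ga I' (dec f) \<ge> ereal (1 / (2 * real (4 ^ N + length cs)) * \<epsilon>)"
  unfolding pent_dist_def
proof (rule Inf_greatest, clarify)
  fix h assume h: "pent_sat P al be ga I' h"
  define S where "S = {w \<in> PX I' \<union> PY I'. dec f w \<noteq> h w}"
  define c1 :: real where "c1 = 1 / (2 * real (4 ^ N + length cs))"
  have pos: "(0::real) < 4 ^ N + real (length cs)" by (simp add: add_pos_nonneg)
  have "c1 * \<epsilon> \<le> sum (Pw I') S"
  proof (cases "\<forall>j < length cs. h (class_var v0 j) = cs ! j")
    case False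
    then obtain j where j: "j < length cs" "class_var v0 j \<in> S"
      by (auto simp: S_def PY_I')
    have "c1 * \<epsilon> \<le> c1" using mult_left_le[of \<epsilon> c1] \<epsilon> by (simp add: c1_def)
    also have "c1 \<le> 1 / (2 * real (length cs))"
      unfolding c1_def using one_le_length_cs pos by (intro divide_left_mono mult_pos_pos) auto
    also have "\<dots> = Pw I' (class_var v0 j)" by (simp add: Pw_class_var)
    also have "\<dots> \<le> sum (Pw I') S"
      using j(2) finite_PX Pw_nonneg by (intro member_le_sum) (auto simp: S_def PY_I')
    finally show ?thesis .
  next
    case True
    have "ereal \<epsilon> \<le> ereal (2 * 4 ^ N * sum (Pw I') S)"
      using far lat_dist_le_changed_leaves[OF f h] True unfolding S_def by (blast intro: order_trans)
    then have "\<epsilon> / (2 * 4 ^ N) \<le> sum (Pw I') S" by (simp add: divide_le_eq mult.commute)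
    moreover have "c1 * \<epsilon> \<le> \<epsilon> / (2 * 4 ^ N)"
    proof -
      have "c1 \<le> 1 / (2 * 4 ^ N)"
        unfolding c1_def using pos by (intro divide_left_mono mult_pos_pos) auto
      then show ?thesis using mult_right_mono[of c1 "1 / (2 * 4 ^ N)" \<epsilon>] \<epsilon>(1) by simp
    qed
    ultimately show ?thesis by linarith
  qed
  then show "ereal (1 / (2 * real (4 ^ N + length cs)) * \<epsilon>) \<le>
      ereal (sum (Pw I') {w \<in> PX I' \<union> PY I'. dec f w \<noteq> h w})"
    by (simp add: S_def c1_def)
qed

end

lemma reduce_linear_reduction:
  "linear_reduction P al be ga D (\<lambda>I. return_pmf (reduce_inst M N cs I, dec))"
proof (rule deterministic_linear_reduction)
  have "(0::real) < 4 ^ N + real (length cs)" by (simp add: add_pos_nonneg)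
  then show "0 < real (4 ^ N + length cs)" "0 < 1 / (2 * real (4 ^ N + length cs))" by simp_all
next
  fix I :: "('v, 'a) lat_inst" assume I: "lat_valid L D I"
  show "pent_valid (reduce_inst M N cs I) \<and>
      real (card (PX (reduce_inst M N cs I) \<union> PY (reduce_inst M N cs I)))
        \<le> real (4 ^ N + length cs) * real (card (LV I)) \<and>
      (\<forall>w \<in> PX (reduce_inst M N cs I) \<union> PY (reduce_inst M N cs I). \<exists>Q \<subseteq> LV I. card Q \<le> 1 \<and>
         (\<forall>f g. (\<forall>q \<in> Q. f q = g q) \<longrightarrow> dec f w = dec g w))"
    using reduce_valid[OF I] reduce_card[OF I] reduce_local[OF I] by blast
  fix f assume f: "lat_assign L I f"
  show "pent_assign P be ga (reduce_inst M N cs I) (dec f) \<and>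
      (lat_sat L I f \<longrightarrow> pent_sat P al be ga (reduce_inst M N cs I) (dec f))"
    using reduce_assign[OF I f] reduce_sat[OF I] by blast
  fix \<epsilon> :: real assume "0 < \<epsilon>" "\<epsilon> < 1" "lat_dist L I f \<ge> ereal \<epsilon>"
  then show "pent_dist P al be ga (reduce_inst M N cs I) (dec f) \<ge>
      ereal (1 / (2 * real (4 ^ N + length cs)) * \<epsilon>)"
    by (rule reduce_dist[OF I f])
qed

end

theorem mainTheorem15:
  fixes P :: "'a set" and al be ga :: "('a \<times> 'a) set" and D :: real
  assumes "pentagon P al be ga" and "D \<ge> 1"
  shows "\<exists>red :: ('v, 'a) lat_inst \<Rightarrow>
             (('v \<times> nat) pent_inst \<times> (('v \<Rightarrow> 'a crel) \<Rightarrow> ('v \<times> nat) \<Rightarrow> 'a set)) pmf.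
           linear_reduction P al be ga D red"
proof -
  obtain N where N: "\<forall>m \<in> LP P al be ga. tree_repr P al be ga N m"
    using uniform_tree_repr[OF assms(1)] by blast
  obtain cs where cs: "set cs = P // ga"
    using finite_list[OF finite_quotient_ga[OF assms(1)]] by blast
  define enc where "enc m = (SOME p. range p \<subseteq> P // be \<and> tree_val (alpha_b P al ga) N p = m)" for m
  have enc: "range (enc m) \<subseteq> P // be \<and> tree_val (alpha_b P al ga) N (enc m) = m"
    if "m \<in> LP P al be ga" for m
  proof -
    have "\<exists>p. range p \<subseteq> P // be \<and> tree_val (alpha_b P al ga) N p = m"
      using N that by (simp add: tree_repr_def)
    then show ?thesis unfolding enc_def by (rule someI_ex)
  qed
  interpret lattice_encoding P al be ga "card (P // ga \<times> P // ga)" N cs enc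
    using assms(1) cs enc by unfold_locales simp_all
  show ?thesis using reduce_linear_reduction by blast
qed

end
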